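(* Let $0<q<1$, let $z\in\mathbb{C}$ with $\Re z>0$, let $m\ge 1$ be an integer, and let $s\in\mathbb{C}$ with $\Re s>0$. Then $$\zeta(s,z:q)=-\frac{(q-q^2)^s}{s\log q}F(s,s,s+1:q^z)+\frac12\Big(\frac{q-q^2}{1-q^z}\Big)^s+s\Big(\frac{q-q^2}{1-q^z}\Big)^s\sum_{k=1}^{m}\frac{B_{2k}}{(2k)!}\Big(\frac{\log q}{q^z-1}\Big)^{2k-1}P_{2k-1}(q^z;s)-R_{2m}(s,z:q),$$ where $$R_{2m}(s,z:q)=s\int_0^\infty\frac{\overline{B}_{2m}(t)}{(2m)!}\Big(\frac{\log q}{q^{t+z}-1}\Big)^{2m}\Big(\frac{1-q}{1-q^{t+z}}\Big)^s q^{s(t+1)}P_{2m}(q^{t+z};s)\,dt.$$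
   Context: $[x]_q=\frac{1-q^x}{1-q}$ and $\zeta(s,z:q)=\sum_{k=0}^{\infty}q^{s(k+1)}/[k+z]_q^{\,s}$ (convergent for $\Re s>0$), complex powers taken with the principal branch. $F(\alpha,\beta,\gamma:x)$ is the Gauss hypergeometric function ${}_2F_1(\alpha,\beta;\gamma;x)$. $B_k$ are the Bernoulli numbers and $B_n(t)$ the Bernoulli polynomials, defined by $\frac{ze^{tz}}{e^z-1}=\sum_{n\ge0}\frac{B_n(t)}{n!}z^n$, $B_k=B_k(0)$; $\overline{B}_n(t)=B_n(t-\lfloor t\rfloor)$ is the periodic extension. The polynomials $P_k(x;s)$ are defined by $P_0(x;s)=\frac1s$, $P_1(x;s)=1$, and $P_{k+1}(x;s)=(x-x^2)\frac{\partial}{\partial x}P_k(x;s)+(kx+s)P_k(x;s)$. *)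

theory Defs
  imports "HOL-Analysis.Analysis" "HOL-Computational_Algebra.Formal_Power_Series"
          "HOL-Computational_Algebra.Polynomial"
begin

definition qnum :: "real \<Rightarrow> complex \<Rightarrow> complex" where
  "qnum q x = (1 - of_real q powr x) / (1 - of_real q)"

definition qzeta :: "complex \<Rightarrow> complex \<Rightarrow> real \<Rightarrow> complex" where
  "qzeta s z q = (\<Sum>k. of_real q powr (s * of_nat (k + 1)) / (qnum q (of_nat k + z)) powr s)"

definition hyp2F1 :: "complex \<Rightarrow> complex \<Rightarrow> complex \<Rightarrow> complex \<Rightarrow> complex" where
  "hyp2F1 a b c x = (\<Sum>n. pochhammer a n * pochhammer b n / (pochhammer c n * of_nat (fact n)) * x ^ n)"

definition bernpoly :: "nat \<Rightarrow> real \<Rightarrow> real" where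
  "bernpoly n t = fact n * fps_nth (fps_X * fps_exp t / (fps_exp 1 - 1)) n"

definition bernnum :: "nat \<Rightarrow> real" where
  "bernnum k = bernpoly k 0"

definition pbernpoly :: "nat \<Rightarrow> real \<Rightarrow> real" where
  "pbernpoly n t = bernpoly n (t - of_int \<lfloor>t\<rfloor>)"

fun Ppoly :: "nat \<Rightarrow> complex \<Rightarrow> complex poly" where
  "Ppoly 0 s = [:1 / s:]"
| "Ppoly (Suc 0) s = [:1:]"
| "Ppoly (Suc (Suc k)) s =
     [:0, 1, -1:] * pderiv (Ppoly (Suc k) s) + [:s, of_nat (Suc k):] * Ppoly (Suc k) s"

definition Rrem :: "nat \<Rightarrow> complex \<Rightarrow> complex \<Rightarrow> real \<Rightarrow> complex" where
  "Rrem m s z q = s * integral {0..} (\<lambda>t::real.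
      of_real (pbernpoly (2*m) t / fact (2*m))
      * (of_real (ln q) / (of_real q powr (of_real t + z) - 1)) ^ (2*m)
      * ((1 - of_real q) / (1 - of_real q powr (of_real t + z))) powr s
      * of_real q powr (s * (of_real t + 1))
      * poly (Ppoly (2*m) s) (of_real q powr (of_real t + z)))"

end

theory Submission
  imports Defs
begin

text \<open>
  The k-th term of zeta(s,z:q) is f(k), where f(w) = ((1-q)/(1-q^(w+z)))^s q^(s(w+1)), and the
  j-th derivative of f is (-1)^j s f(w) (log q/(q^(w+z)-1))^j P_j(q^(w+z)): the recursion defining
  P_j is exactly what one more differentiation produces. On [0, oo) all these derivatives decay like
  q^(t Re s), so Euler-Maclaurin summation of f over the nonnegative integers with 2m correction
  terms applies once f has a primitive vanishing at infinity. Expanding (1-q^(w+z))^(-s) by the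
  binomial series writes f as a series of exponentials in w; integrating termwise gives such a
  primitive, and its value at 0 is (q-q^2)^s/(s log q) F(s,s,s+1:q^z). Finally, the odd Bernoulli
  numbers beyond B_1 vanish, so only the B_2k survive.
\<close>

section \<open>Bernoulli polynomials\<close>

definition bernoulli_fps :: "real fps" where
  "bernoulli_fps = fps_X / (fps_exp 1 - 1)"

lemma subdegree_fps_exp_minus_one: "subdegree (fps_exp (1::real) - 1) = 1"
  by (rule subdegreeI) auto

lemma fps_exp_minus_one_nonzero: "fps_exp (1::real) - 1 \<noteq> 0"
  using subdegree_fps_exp_minus_one by fastforce

lemma bernoulli_fps_times: "bernoulli_fps * (fps_exp 1 - 1) = fps_X"
  unfolding bernoulli_fps_def
  by (rule fps_times_divide_eq) (use fps_exp_minus_one_nonzero subdegree_fps_exp_minus_one in auto)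

lemma bernpoly_fps: "bernpoly n t = fact n * fps_nth (bernoulli_fps * fps_exp t) n"
  unfolding bernpoly_def bernoulli_fps_def
  by (subst fps_divide_times2) (simp only: subdegree_fps_exp_minus_one, simp_all)

lemma bernnum_fps: "bernnum n = fact n * fps_nth bernoulli_fps n"
  by (simp add: bernnum_def bernpoly_fps)

lemma bernpoly_conv_sum: "bernpoly n t = (\<Sum>i\<le>n. of_nat (n choose i) * bernnum i * t ^ (n - i))"
  unfolding bernpoly_fps fps_mult_nth bernnum_fps
  by (simp add: atLeast0AtMost sum_distrib_left binomial_fact field_simps)

lemma bernpoly_1_eq_bernpoly_0: "n \<noteq> 1 \<Longrightarrow> bernpoly n 1 = bernpoly n 0"
proof -
  assume "n \<noteq> 1"
  have "bernpoly n 1 - bernpoly n 0 = fact n * fps_nth (bernoulli_fps * (fps_exp 1 - 1)) n"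
    by (simp add: bernpoly_fps algebra_simps)
  with \<open>n \<noteq> 1\<close> show ?thesis by (simp add: bernoulli_fps_times)
qed

lemma bernoulli_fps_reflect: "bernoulli_fps oo (- fps_X) = bernoulli_fps + fps_X"
proof -
  define g E where "g = bernoulli_fps" and "E = fps_exp (1::real)"
  have "(g oo - fps_X) * (fps_exp (-1) - 1) = - fps_X"
    using arg_cong[OF bernoulli_fps_times, of "\<lambda>f. f oo - fps_X"]
    by (simp add: fps_compose_mult_distrib fps_compose_sub_distrib g_def)
  then have "(g oo - fps_X) * (fps_exp (-1) - 1) * E = - fps_X * E" by simp
  moreover have "E * (fps_exp (-1) * h) = h" for h
  proof -
    have "fps_exp (-1) * E = 1" by (simp add: E_def fps_exp_add_mult[symmetric])
    then show ?thesis by (metis mult.assoc mult.commute mult_1)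
  qed
  ultimately have "(g oo - fps_X) * (E - 1) = fps_X * E"
    by (simp add: algebra_simps)
  also have "\<dots> = (fps_X + g) * (E - 1)"
    using bernoulli_fps_times by (simp add: g_def E_def algebra_simps)
  finally show ?thesis using fps_exp_minus_one_nonzero by (simp add: g_def E_def add.commute)
qed

lemma bernnum_odd: "odd n \<Longrightarrow> bernnum n = (if n = 1 then - 1/2 else 0)"
proof -
  assume "odd n"
  have "fps_nth (bernoulli_fps oo (- fps_X)) n = fps_nth (bernoulli_fps + fps_X) n"
    by (simp only: bernoulli_fps_reflect)
  with \<open>odd n\<close> have "- fps_nth bernoulli_fps n = fps_nth bernoulli_fps n + (if n = 1 then 1 else 0)"
    by (simp add: fps_compose_uminus')
  then show ?thesis by (auto simp: bernnum_fps)
qed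

lemma bernnum_0: "bernnum 0 = 1"
proof -
  have "fps_nth (bernoulli_fps * (fps_exp 1 - 1)) 1 = 1"
    by (simp add: bernoulli_fps_times)
  then show ?thesis by (simp add: fps_mult_nth bernnum_fps)
qed

lemma bernpoly_0_left [simp]: "bernpoly 0 t = 1"
  by (simp add: bernpoly_conv_sum bernnum_0)

lemma bernpoly_1_left: "bernpoly 1 t = t - 1/2"
  by (simp add: bernpoly_conv_sum bernnum_0 bernnum_odd)

lemma has_real_derivative_bernpoly:
  "(bernpoly (Suc n) has_real_derivative (of_nat (Suc n) * bernpoly n t)) (at t)"
proof -
  let ?d = "\<Sum>i\<le>Suc n. of_nat (Suc n choose i) * bernnum i * (of_nat (Suc n - i) * t ^ (Suc n - i - 1))"
  have "(bernpoly (Suc n) has_real_derivative ?d) (at t)"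
    unfolding bernpoly_conv_sum[abs_def] by (intro DERIV_sum) (auto intro!: derivative_eq_intros)
  moreover have "?d = (\<Sum>i\<le>n. of_nat ((Suc n - i) * (Suc n choose i)) * bernnum i * t ^ (n - i))"
    by (simp add: sum.atMost_Suc) (intro sum.cong; simp add: Suc_diff_le)
  also have "\<dots> = of_nat (Suc n) * bernpoly n t"
    by (simp only: binomial_absorb_comp diff_Suc_1 of_nat_mult mult.assoc bernpoly_conv_sum
          sum_distrib_left)
  ultimately show ?thesis by simp
qed

lemma continuous_on_bernpoly [continuous_intros]: "continuous_on A (bernpoly n)"
  unfolding bernpoly_conv_sum[abs_def] by (intro continuous_intros)

lemma bounded_pbernpoly: "\<exists>B. \<forall>t. \<bar>pbernpoly n t\<bar> \<le> B"
proof -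
  obtain B where B: "\<forall>y\<in>bernpoly n ` {0..1}. norm y \<le> B"
    using compact_imp_bounded[OF compact_continuous_image[OF continuous_on_bernpoly compact_Icc]]
    unfolding bounded_iff by blast
  have "t - of_int \<lfloor>t\<rfloor> \<in> {0..1}" for t :: real
    using frac_ge_0[of t] frac_lt_1[of t] by (simp add: frac_def)
  with B have "\<bar>pbernpoly n t\<bar> \<le> B" for t by (simp add: pbernpoly_def)
  then show ?thesis by blast
qed

lemma pbernpoly_eq_bernpoly:
  assumes "n \<noteq> 1" "real k \<le> t" "t \<le> real k + 1"
  shows "pbernpoly n t = bernpoly n (t - real k)"
proof (cases "t = real k + 1")
  case True
  then show ?thesis using bernpoly_1_eq_bernpoly_0[OF \<open>n \<noteq> 1\<close>] by (simp add: pbernpoly_def)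
next
  case False
  with assms have "\<lfloor>t\<rfloor> = int k" by (simp add: floor_eq_iff)
  then show ?thesis by (simp add: pbernpoly_def)
qed

section \<open>Euler-Maclaurin summation over the nonnegative integers\<close>

lemma sum_alternating_telescope:
  fixes c :: "nat \<Rightarrow> 'a::ring_1"
  shows "(\<Sum>j=1..p. (-1)^(j-1) * (c j + c (j-1))) = c 0 - (-1)^p * c p"
  by (induction p) (simp_all add: algebra_simps)

locale euler_maclaurin =
  fixes p :: nat and G :: "real \<Rightarrow> 'a::{real_normed_field,banach}" and D :: "nat \<Rightarrow> real \<Rightarrow> 'a"
  assumes order_ge_2: "2 \<le> p"
    and has_vector_derivative_G: "\<And>t. 0 \<le> t \<Longrightarrow> (G has_vector_derivative D 0 t) (at t)"
    and has_vector_derivative_D: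
      "\<And>j t. j < p \<Longrightarrow> 0 \<le> t \<Longrightarrow> (D j has_vector_derivative D (Suc j) t) (at t)"
begin

definition correction :: "real \<Rightarrow> 'a" where
  "correction t = (\<Sum>j=2..p. (-1)^(j-1) * of_real (bernnum j / fact j) * D (j-1) t)"

definition remainder :: "real \<Rightarrow> 'a" where
  "remainder t = of_real (pbernpoly p t / fact p) * D p t"

text \<open>
  Integration by parts \<open>p\<close> times on \<open>[k, k+1]\<close>: the derivative of \<open>local_sum k\<close>
  telescopes, so \<open>(-1)\<^sup>p (G - local_sum k)\<close> is a primitive of the remainder there.
\<close>
definition local_sum :: "nat \<Rightarrow> real \<Rightarrow> 'a" where
  "local_sum k t = (\<Sum>j=1..p. (-1)^(j-1) * of_real (bernpoly j (t - k) / fact j) * D (j-1) t)"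

lemma has_vector_derivative_bernpoly_shift:
  "((\<lambda>t. of_real (bernpoly (Suc j) (t - k) / fact (Suc j)) :: 'a)
     has_vector_derivative of_real (bernpoly j (t - k) / fact j)) (at t)"
proof -
  have "((\<lambda>t. bernpoly (Suc j) (t - k) / fact (Suc j)) has_real_derivative
      of_nat (Suc j) * bernpoly j (t - k) * 1 / fact (Suc j)) (at t)"
    by (intro DERIV_cdivide DERIV_chain2[OF has_real_derivative_bernpoly] derivative_eq_intros) auto
  then show ?thesis
    by (intro has_vector_derivative_of_real) (simp del: of_nat_Suc add: fact_Suc)
qed

lemma has_vector_derivative_local_sum:
  assumes "0 \<le> t"
  shows "(local_sum k has_vector_derivative D 0 t - (-1)^p * (of_real (bernpoly p (t - k) / fact p) * D p t)) (at t)"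
proof -
  define c where "c j = of_real (bernpoly j (t - k) / fact j) * D j t" for j
  have "((\<lambda>t. (-1)^(j-1) * of_real (bernpoly j (t - k) / fact j) * D (j-1) t)
      has_vector_derivative (-1)^(j-1) * (c j + c (j-1))) (at t)" if "j \<in> {1..p}" for j
  proof -
    from that obtain i where i: "j = Suc i" "i < p" by (cases j) auto
    have "((\<lambda>t. (-1)^i * of_real (bernpoly (Suc i) (t - k) / fact (Suc i)) * D i t)
        has_vector_derivative ((-1)^i * of_real (bernpoly (Suc i) (t - k) / fact (Suc i))) * D (Suc i) t
          + ((-1)^i * of_real (bernpoly i (t - k) / fact i)) * D i t) (at t)"
      by (intro has_vector_derivative_mult has_vector_derivative_mult_right
          has_vector_derivative_bernpoly_shift has_vector_derivative_D[OF i(2) assms])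
    then show ?thesis by (simp add: i c_def algebra_simps)
  qed
  then have "(local_sum k has_vector_derivative (\<Sum>j=1..p. (-1)^(j-1) * (c j + c (j-1)))) (at t)"
    unfolding local_sum_def[abs_def] by (rule has_vector_derivative_sum)
  then show ?thesis unfolding sum_alternating_telescope by (simp add: c_def)
qed

lemma local_sum_endpoints:
  "local_sum k (real k + 1) = D 0 (real k + 1) / 2 + correction (real k + 1)"
  "local_sum k (real k) = - D 0 (real k) / 2 + correction (real k)"
proof -
  have split: "local_sum k t = of_real (bernpoly 1 (t - k)) * D 0 t +
      (\<Sum>j=2..p. (-1)^(j-1) * of_real (bernpoly j (t - k) / fact j) * D (j-1) t)" for t
    unfolding local_sum_def using order_ge_2 by (subst sum.atLeast_Suc_atMost) (auto simp: numeral_2_eq_2)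
  have "j \<in> {2..p} \<Longrightarrow> bernpoly j 1 = bernnum j" "j \<in> {2..p} \<Longrightarrow> bernpoly j 0 = bernnum j" for j
    using bernpoly_1_eq_bernpoly_0[of j] by (auto simp: bernnum_def)
  then have "(\<Sum>j=2..p. (-1)^(j-1) * of_real (bernpoly j 1 / fact j) * D (j-1) t) = correction t"
    "(\<Sum>j=2..p. (-1)^(j-1) * of_real (bernpoly j 0 / fact j) * D (j-1) t) = correction t" for t
    unfolding correction_def by (auto intro!: sum.cong)
  then show "local_sum k (real k + 1) = D 0 (real k + 1) / 2 + correction (real k + 1)"
      "local_sum k (real k) = - D 0 (real k) / 2 + correction (real k)"
    unfolding split add_diff_cancel_left' diff_self by (simp_all add: bernpoly_1_left[unfolded One_nat_def])
qed

lemma has_integral_remainder_unit_interval: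
  "(remainder has_integral (-1)^p * (G (real k + 1) - G (real k) - (D 0 (real k + 1) + D 0 (real k)) / 2
      - (correction (real k + 1) - correction (real k)))) {real k..real k + 1}"
proof -
  define H where "H t = (-1)^p * (G t - local_sum k t)" for t
  have "(remainder has_integral (H (real k + 1) - H (real k))) {real k..real k + 1}"
  proof (rule fundamental_theorem_of_calculus)
    fix t assume t: "t \<in> {real k..real k + 1}"
    have "(H has_vector_derivative (-1)^p * (D 0 t - (D 0 t - (-1)^p * (of_real (bernpoly p (t - k) / fact p) * D p t))))
        (at t within {real k..real k + 1})"
      unfolding H_def
      by (rule has_vector_derivative_at_within, intro has_vector_derivative_mult_right has_vector_derivative_diff
          has_vector_derivative_G has_vector_derivative_local_sum) (use t in auto)
    moreover have "pbernpoly p t = bernpoly p (t - k)"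
      using order_ge_2 t by (intro pbernpoly_eq_bernpoly) auto
    ultimately show "(H has_vector_derivative remainder t) (at t within {real k..real k + 1})"
      by (simp add: remainder_def flip: power_add mult.assoc)
  qed simp
  then show ?thesis unfolding H_def local_sum_endpoints by (simp add: algebra_simps add_divide_distrib)
qed

lemma has_integral_remainder:
  "(remainder has_integral (-1)^p * (G (real N) - G 0 - (\<Sum>k<N. D 0 (real k))
      - (D 0 (real N) - D 0 0) / 2 - (correction (real N) - correction 0))) {0..real N}"
proof (induction N)
  case (Suc N)
  have "(remainder has_integral
      (-1)^p * (G (real N) - G 0 - (\<Sum>k<N. D 0 (real k)) - (D 0 (real N) - D 0 0) / 2
        - (correction (real N) - correction 0))
      + (-1)^p * (G (real N + 1) - G (real N) - (D 0 (real N + 1) + D 0 (real N)) / 2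
        - (correction (real N + 1) - correction (real N)))) {0..real N + 1}"
    by (rule has_integral_combine[OF _ _ Suc.IH has_integral_remainder_unit_interval]) auto
  then show ?case by (simp add: algebra_simps add_divide_distrib diff_divide_distrib)
qed (simp add: has_integral_refl)

lemma remainder_exp_bound:
  assumes "\<And>t. 0 \<le> t \<Longrightarrow> norm (D p t) \<le> K * exp (a * t)"
  shows "\<exists>C. \<forall>t\<ge>0. norm (remainder t) \<le> C * exp (a * t)"
proof -
  obtain B where B: "\<And>t. \<bar>pbernpoly p t\<bar> \<le> B" using bounded_pbernpoly by blast
  have "norm (remainder t) \<le> (B / fact p * K) * exp (a * t)" if "0 \<le> t" for t
    unfolding remainder_def norm_mult norm_of_real
    using B[of t] assms[OF that] order_trans[OF abs_ge_zero B[of t]]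
    by (simp add: abs_divide mult.assoc mult_mono divide_right_mono)
  then show ?thesis by blast
qed

lemma sum_eq_euler_maclaurin:
  "(\<Sum>k<N. D 0 (real k)) = G (real N) - G 0 - (D 0 (real N) - D 0 0) / 2
      - (correction (real N) - correction 0) - (-1)^p * integral {0..real N} remainder"
  by (simp add: integral_unique[OF has_integral_remainder] flip: mult.assoc power_add)

theorem euler_maclaurin_sums:
  assumes "(\<lambda>N. G (real N)) \<longlonglongrightarrow> 0" and "\<And>j. j < p \<Longrightarrow> (\<lambda>N. D j (real N)) \<longlonglongrightarrow> 0"
    and "(\<lambda>N. integral {0..real N} remainder) \<longlonglongrightarrow> I"
  shows "(\<lambda>k. D 0 (real k)) sums (- G 0 + D 0 0 / 2 + correction 0 - (-1)^p * I)"
proof -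
  have correction: "(\<lambda>N. correction (real N)) \<longlonglongrightarrow> 0"
    unfolding correction_def using order_ge_2 by (intro tendsto_null_sum tendsto_mult_right_zero assms(2)) auto
  have D0: "(\<lambda>N. D 0 (real N)) \<longlonglongrightarrow> 0" using order_ge_2 by (intro assms(2)) auto
  have two: "(2::'a) \<noteq> 0" by (metis norm_numeral norm_zero zero_neq_numeral)
  have "(\<lambda>N. G (real N) - G 0 - (D 0 (real N) - D 0 0) / 2 - (correction (real N) - correction 0)
      - (-1)^p * integral {0..real N} remainder)
    \<longlonglongrightarrow> 0 - G 0 - (0 - D 0 0) / 2 - (0 - correction 0) - (-1)^p * I"
    by (intro tendsto_intros assms(1,3) correction D0 two)
  then show ?thesis unfolding sums_def sum_eq_euler_maclaurin by (simp add: algebra_simps)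
qed

end

section \<open>Complex powers, binomial series and improper integrals\<close>

lemma powr_of_real_pos: "0 < q \<Longrightarrow> complex_of_real q powr w = exp (w * of_real (ln q))"
  by (simp add: powr_def Ln_of_real)

lemma inverse_powr_complex:
  fixes u :: complex
  assumes "0 < Re u"
  shows "inverse u powr s = u powr - s"
proof -
  have "u \<notin> \<real>\<^sub>\<le>\<^sub>0" "u \<noteq> 0" using assms by (auto simp: complex_nonpos_Reals_iff)
  then show ?thesis by (simp add: powr_def Ln_inverse)
qed

lemma of_real_divide_powr_complex:
  fixes u :: complex
  assumes "0 < c" "0 < Re u"
  shows "(of_real c / u) powr s = of_real c powr s * u powr - s"
proof -
  have "(of_real c / u) powr s = (of_real c * inverse u) powr s" by (simp add: divide_inverse)
  also have "\<dots> = of_real c powr s * inverse u powr s"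
    using assms(1) by (intro powr_times_real_left) auto
  finally show ?thesis by (simp add: inverse_powr_complex[OF assms(2)])
qed

lemma norm_powr_le: "norm (x powr y) \<le> norm x powr Re y * exp (\<bar>Im y\<bar> * pi)"
proof -
  have "\<bar>Arg x\<bar> \<le> pi" using mpi_less_Arg[of x] Arg_le_pi[of x] by linarith
  then have "\<bar>Im y\<bar> * \<bar>Arg x\<bar> \<le> \<bar>Im y\<bar> * pi" by (intro mult_left_mono) auto
  moreover have "- Im y * Arg x \<le> \<bar>Im y\<bar> * \<bar>Arg x\<bar>"
    by (metis abs_ge_self abs_minus_cancel abs_mult mult_minus_left)
  ultimately have "- Im y * Arg x \<le> \<bar>Im y\<bar> * pi" by linarith
  then show ?thesis unfolding norm_powr_complex by (intro mult_left_mono) auto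
qed

lemma norm_pochhammer_le: "norm (pochhammer (s::complex) n) \<le> pochhammer (norm s) n"
proof (induction n)
  case (Suc n)
  have "norm (pochhammer s (Suc n)) = norm (pochhammer s n) * norm (s + of_nat n)"
    by (simp add: pochhammer_Suc norm_mult)
  also have "\<dots> \<le> pochhammer (norm s) n * (norm s + of_nat n)"
    using norm_triangle_ineq[of s "of_nat n"]
    by (intro mult_mono Suc.IH) (auto simp: pochhammer_prod intro!: prod_nonneg)
  finally show ?case by (simp add: pochhammer_Suc)
qed simp

lemma summable_pochhammer_power:
  fixes a r :: real
  assumes "0 \<le> r" "r < 1"
  shows "summable (\<lambda>n. pochhammer a n / fact n * r ^ n)"
proof -
  have "(\<lambda>n. ((-a) gchoose n) * (-r)^n) sums (1 + -r) powr (-a)"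
    using assms by (intro gen_binomial_real) auto
  moreover have "((-a) gchoose n) * (-r)^n = pochhammer a n / fact n * r^n" for n
    by (simp add: gbinomial_pochhammer power_minus[of r] mult_ac flip: power_add mult_2)
  ultimately show ?thesis by (simp add: sums_iff)
qed

lemma summable_norm_pochhammer_power:
  fixes s :: complex and r :: real
  assumes "0 \<le> r" "r < 1"
  shows "summable (\<lambda>n. norm (pochhammer s n / fact n) * r ^ n)"
proof (rule summable_comparison_test'[OF summable_pochhammer_power[OF assms, of "norm s"]])
  fix n
  show "norm (norm (pochhammer s n / fact n) * r ^ n) \<le> pochhammer (norm s) n / fact n * r ^ n"
    using assms by (simp add: norm_divide abs_mult divide_right_mono mult_right_mono norm_pochhammer_le)
qed

lemma tendsto_zero_exp_bound:
  fixes f :: "real \<Rightarrow> 'a::real_normed_vector"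
  assumes "a < 0" and "\<And>t. 0 \<le> t \<Longrightarrow> norm (f t) \<le> K * exp (a * t)"
  shows "(\<lambda>N. f (real N)) \<longlonglongrightarrow> 0"
proof (rule Lim_null_comparison)
  have "norm (f (real N)) \<le> K * exp a ^ N" for N
    using assms(2)[of "real N"] by (simp add: exp_of_nat_mult[symmetric] mult.commute)
  then show "\<forall>\<^sub>F N in sequentially. norm (f (real N)) \<le> K * exp a ^ N" by simp
  show "(\<lambda>N. K * exp a ^ N) \<longlonglongrightarrow> 0"
    using assms(1) by (intro tendsto_mult_right_zero LIMSEQ_power_zero) auto
qed

lemma improper_integral_exp_bound:
  fixes f :: "real \<Rightarrow> 'a::euclidean_space"
  assumes "a < 0" and integrable: "\<And>N. f integrable_on {0..real N}"
    and bound: "\<And>t. 0 \<le> t \<Longrightarrow> norm (f t) \<le> K * exp (a * t)"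
  shows "f integrable_on {0..}" and "(\<lambda>N. integral {0..real N} f) \<longlonglongrightarrow> integral {0..} f"
proof -
  define h where "h t = K * exp (a * t)" for t
  have "h integrable_on {0..}"
    unfolding h_def using integrable_on_cmult_left[OF integrable_on_exp_minus_to_infinity[of "- a" 0], of K] assms(1)
    by simp
  define fN where "fN N t = (if t \<in> {0..real N} then f t else 0)" for N t
  have fN: "(fN N has_integral integral {0..real N} f) {0..}" for N
    unfolding fN_def using integrable[of N] by (subst has_integral_restrict) auto
  have "norm (fN N t) \<le> h t" if "t \<in> {0..}" for N t
    using bound[of t] that order_trans[OF norm_ge_zero bound[of t]] by (auto simp: fN_def h_def)
  moreover have "(\<lambda>N. fN N t) \<longlonglongrightarrow> f t" if "t \<in> {0..}" for t
  proof (rule tendsto_eventually, rule eventually_sequentiallyI)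
    fix N assume "nat \<lceil>t\<rceil> \<le> N"
    then show "fN N t = f t" using that by (auto simp: fN_def)
  qed
  ultimately have "f integrable_on {0..}" "(\<lambda>N. integral {0..} (fN N)) \<longlonglongrightarrow> integral {0..} f"
    using dominated_convergence[of fN "{0..}" h f] fN \<open>h integrable_on {0..}\<close> by blast+
  then show "f integrable_on {0..}" "(\<lambda>N. integral {0..real N} f) \<longlonglongrightarrow> integral {0..} f"
    using integral_unique[OF fN] by simp_all
qed

section \<open>The summand of the \<open>q\<close>-zeta series\<close>

lemma sum_even_part:
  fixes g :: "nat \<Rightarrow> 'a::comm_monoid_add"
  assumes "\<And>k. 1 \<le> k \<Longrightarrow> g (Suc (2 * k)) = 0"
  shows "(\<Sum>j=2..2*m. g j) = (\<Sum>k=1..m. g (2 * k))"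
proof (cases "m = 0")
  case False
  then have "(\<Sum>j=2..2*m. g j) = (\<Sum>j=2*1..Suc (2*m). g j)"
    using assms[of m] by (simp add: sum.cl_ivl_Suc)
  also have "\<dots> = (\<Sum>k=1..m. g (2 * k) + g (Suc (2 * k)))"
    by (rule sum.in_pairs)
  also have "\<dots> = (\<Sum>k=1..m. g (2 * k))"
    using assms by (intro sum.cong) auto
  finally show ?thesis .
qed simp

lemma poly_Ppoly_Suc:
  "s \<noteq> 0 \<Longrightarrow> poly (Ppoly (Suc j) s) x =
     (x - x^2) * poly (pderiv (Ppoly j s)) x + (s + of_nat j * x) * poly (Ppoly j s) x"
  by (cases j) (simp_all add: algebra_simps power2_eq_square)

locale qzeta_setting =
  fixes q :: real and z s :: complex
  assumes q_pos: "0 < q" and q_less_1: "q < 1" and Re_z_pos: "0 < Re z" and Re_s_pos: "0 < Re s"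
begin

definition "L = complex_of_real (ln q)"
definition "X w = exp ((w + z) * L)"
definition "Y w = L / (X w - 1)"
definition "summand w = (complex_of_real (1 - q) / (1 - X w)) powr s * exp (s * (w + 1) * L)"
definition "summand_deriv j w = (-1)^j * s * summand w * Y w ^ j * poly (Ppoly j s) (X w)"
definition "halfplane = {w. 0 < Re w + Re z}"

lemma ln_q_neg: "ln q < 0"
  using q_pos q_less_1 by simp

lemma s_nonzero: "s \<noteq> 0"
  using Re_s_pos by auto

lemma L_nonzero: "L \<noteq> 0"
  using ln_q_neg by (simp add: L_def)

lemma norm_X: "norm (X w) = exp ((Re w + Re z) * ln q)"
  by (simp add: X_def L_def)

lemma norm_X_less_1: "w \<in> halfplane \<Longrightarrow> norm (X w) < 1"
  unfolding norm_X halfplane_def using ln_q_neg by (simp add: mult_pos_neg)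

lemma Re_one_minus_X_pos: "w \<in> halfplane \<Longrightarrow> 0 < Re (1 - X w)"
  using norm_X_less_1[of w] complex_Re_le_cmod[of "X w"] by simp

lemma X_neq_1: "w \<in> halfplane \<Longrightarrow> X w \<noteq> 1"
  using Re_one_minus_X_pos by force

lemma of_real_in_halfplane: "0 \<le> t \<Longrightarrow> complex_of_real t \<in> halfplane"
  using Re_z_pos by (simp add: halfplane_def)

lemma has_field_derivative_X: "(X has_field_derivative X w * L) (at w)"
  unfolding X_def by (auto intro!: derivative_eq_intros)

lemma has_field_derivative_Y:
  assumes "w \<in> halfplane"
  shows "(Y has_field_derivative - X w * Y w ^ 2) (at w)"
proof -
  have "X w - 1 \<noteq> 0" using X_neq_1[OF assms] by simp
  then show ?thesis unfolding Y_def[abs_def]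
    by (auto intro!: derivative_eq_intros has_field_derivative_X simp: power2_eq_square field_simps)
qed

lemma Re_summand_base_pos:
  assumes "w \<in> halfplane"
  shows "0 < Re (complex_of_real (1 - q) / (1 - X w))"
proof -
  have "Re (complex_of_real (1 - q) / (1 - X w)) = (1 - q) * Re (1 - X w) / (cmod (1 - X w))^2"
    by (simp add: Re_divide cmod_power2)
  then show ?thesis
    using Re_one_minus_X_pos[OF assms] X_neq_1[OF assms] q_less_1 by (simp add: divide_pos_pos)
qed

lemma has_field_derivative_summand:
  assumes w: "w \<in> halfplane"
  shows "(summand has_field_derivative - s * Y w * summand w) (at w)"
proof -
  define c where "c = complex_of_real (1 - q)"
  have c: "c \<noteq> 0" using q_less_1 by (simp add: c_def)
  have X: "1 - X w \<noteq> 0" using X_neq_1[OF w] by simp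
  have "c / (1 - X w) \<notin> \<real>\<^sub>\<le>\<^sub>0"
    using Re_summand_base_pos[OF w] by (auto simp: c_def complex_nonpos_Reals_iff)
  moreover have "((\<lambda>w. c / (1 - X w)) has_field_derivative c * (X w * L) / (1 - X w)^2) (at w)"
    using X by (auto intro!: derivative_eq_intros has_field_derivative_X simp: power2_eq_square)
  ultimately have "((\<lambda>w. (c / (1 - X w)) powr s) has_field_derivative
      s * (c / (1 - X w)) powr (s - 1) * (c * (X w * L) / (1 - X w)^2)) (at w)"
    by (rule DERIV_chain2[OF has_field_derivative_powr])
  then have "(summand has_field_derivative
      s * (c / (1 - X w)) powr (s - 1) * (c * (X w * L) / (1 - X w)^2) * exp (s * (w + 1) * L)
        + exp (s * (w + 1) * L) * (s * L) * (c / (1 - X w)) powr s) (at w)"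
    unfolding summand_def[abs_def] c_def[symmetric]
    by (rule DERIV_mult) (auto intro!: derivative_eq_intros)
  moreover have "s * (c / (1 - X w)) powr (s - 1) * (c * (X w * L) / (1 - X w)^2) * exp (s * (w + 1) * L)
        + exp (s * (w + 1) * L) * (s * L) * (c / (1 - X w)) powr s = - s * Y w * summand w"
  proof -
    define u where "u = 1 - X w"
    have Xu: "X w = 1 - u" and u: "u \<noteq> 0" using X by (simp_all add: u_def)
    have pw: "(c / u) powr (s - 1) = (c / u) powr s * u / c"
      using c u by (simp add: powr_diff)
    show ?thesis
      unfolding summand_def Y_def c_def[symmetric] Xu using c u by (simp add: pw field_simps power2_eq_square)
  qed
  ultimately show ?thesis by simp
qed

lemma has_field_derivative_summand_deriv:
  assumes w: "w \<in> halfplane"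
  shows "(summand_deriv j has_field_derivative summand_deriv (Suc j) w) (at w)"
proof -
  have "summand_deriv j = (\<lambda>w. (-1)^j * s * (summand w * Y w ^ j * poly (Ppoly j s) (X w)))"
    by (simp add: fun_eq_iff summand_deriv_def mult_ac)
  moreover have "((\<lambda>w. (-1)^j * s * (summand w * Y w ^ j * poly (Ppoly j s) (X w))) has_field_derivative
      (-1)^j * s * ((- s * Y w * summand w * Y w ^ j
        + of_nat j * (- X w * Y w ^ 2 * Y w ^ (j - Suc 0)) * summand w) * poly (Ppoly j s) (X w)
        + poly (pderiv (Ppoly j s)) (X w) * (X w * L) * (summand w * Y w ^ j))) (at w)"
    by (intro DERIV_cmult DERIV_mult DERIV_power has_field_derivative_summand has_field_derivative_Y
        DERIV_chain2[OF poly_DERIV has_field_derivative_X] w)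
  moreover have "L = Y w * (X w - 1)"
    using X_neq_1[OF w] by (simp add: Y_def)
  ultimately show ?thesis using s_nonzero
    by (cases j) (simp_all add: summand_deriv_def poly_Ppoly_Suc[OF s_nonzero] power2_eq_square algebra_simps)
qed

lemma summand_deriv_0 [simp]: "summand_deriv 0 w = summand w"
  using s_nonzero by (simp add: summand_deriv_def)

definition "A = complex_of_real (1 - q) powr s * exp (s * L)"
definition "Q = exp (z * L)"
definition "poch_coeff n = pochhammer s n / fact n"
definition "summand_term n w = A * poch_coeff n * Q ^ n * exp ((s + of_nat n) * w * L)"
definition "primitive_term n w = summand_term n w / ((s + of_nat n) * L)"
definition "primitive w = (\<Sum>n. primitive_term n w)"

text \<open>
  The bound \<open>|Im w| < 1\<close> only serves to make \<open>exp (- Im s Im w log q)\<close> bounded, so that the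
  termwise derivatives converge uniformly on \<open>strip\<close> (Weierstrass M-test).
\<close>
definition "strip = {w. - (Re z / 2) < Re w \<and> \<bar>Im w\<bar> < 1}"
definition "r = exp (ln q * Re z / 2)"

lemma r_bounds: "0 \<le> r" "r < 1"
  unfolding r_def using ln_q_neg Re_z_pos by (auto simp: mult_neg_pos)

lemma s_plus_nonzero: "s + of_nat n \<noteq> 0"
proof
  assume "s + of_nat n = 0"
  then have "Re (s + of_nat n) = 0" by simp
  with Re_s_pos show False by simp
qed

lemma Re_s_le_norm: "Re s \<le> norm (s + of_nat n)"
  using complex_Re_le_cmod[of "s + of_nat n"] by simp

lemma strip_subset_halfplane: "strip \<subseteq> halfplane"
  unfolding strip_def halfplane_def using Re_z_pos by auto

lemma of_real_in_strip: "0 \<le> t \<Longrightarrow> complex_of_real t \<in> strip"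
  unfolding strip_def using Re_z_pos by auto

lemma open_strip: "open strip" and convex_strip: "convex strip"
proof -
  have "strip = {w. - (Re z / 2) < Re w} \<inter> ({w. Im w < 1} \<inter> {w. Im w > -1})"
    unfolding strip_def by auto
  then show "open strip" "convex strip"
    by (simp_all add: open_Int open_halfspace_Re_gt open_halfspace_Im_lt open_halfspace_Im_gt
        convex_Int convex_halfspace_Re_gt convex_halfspace_Im_lt convex_halfspace_Im_gt)
qed

lemma summand_binomial_form:
  assumes "w \<in> halfplane"
  shows "summand w = A * exp (s * w * L) * (1 - X w) powr - s"
proof -
  have "summand w = (of_real (1 - q) powr s * (1 - X w) powr - s) * exp (s * (w + 1) * L)"
    unfolding summand_def using q_less_1 Re_one_minus_X_pos[OF assms]
    by (subst of_real_divide_powr_complex) auto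
  then show ?thesis by (simp add: A_def algebra_simps flip: exp_add)
qed

lemma summand_term_sums:
  assumes "w \<in> halfplane"
  shows "(\<lambda>n. summand_term n w) sums summand w"
proof -
  have "(\<lambda>n. ((-s) gchoose n) * (- X w)^n) sums (1 + - X w) powr - s"
    using norm_X_less_1[OF assms] by (intro gen_binomial_complex) simp
  moreover have "((-s) gchoose n) * (- X w)^n = poch_coeff n * X w ^ n" for n
    by (simp add: poch_coeff_def gbinomial_pochhammer power_minus[of "X w"] mult_ac
        flip: power_add mult_2)
  ultimately have "(\<lambda>n. A * exp (s * w * L) * (poch_coeff n * X w ^ n)) sums summand w"
    using summand_binomial_form[OF assms] by (simp add: sums_mult)
  moreover have "A * exp (s * w * L) * (poch_coeff n * X w ^ n) = summand_term n w" for n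
    by (simp add: summand_term_def X_def Q_def algebra_simps flip: exp_of_nat_mult exp_add)
  ultimately show ?thesis by simp
qed

lemma norm_summand_term:
  "norm (summand_term n w) =
     norm A * norm (poch_coeff n) * exp (ln q * (of_nat n * (Re z + Re w) + Re s * Re w - Im s * Im w))"
  by (simp add: summand_term_def Q_def L_def norm_mult norm_power algebra_simps
      flip: exp_of_nat_mult exp_add)

lemma norm_summand_term_le:
  assumes "w \<in> strip"
  shows "norm (summand_term n w) \<le>
    norm A * exp (- ln q * Re s * Re z / 2 + \<bar>ln q\<bar> * \<bar>Im s\<bar>) * (norm (poch_coeff n) * r ^ n)"
proof -
  from assms have w: "0 \<le> Re w + Re z / 2" "\<bar>Im w\<bar> \<le> 1" unfolding strip_def by auto
  have "ln q * ((Re s + of_nat n) * (Re w + Re z / 2)) \<le> 0"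
    using ln_q_neg Re_s_pos w by (intro mult_nonpos_nonneg) auto
  moreover have "- (ln q * Im s * Im w) \<le> \<bar>ln q\<bar> * \<bar>Im s\<bar>"
  proof -
    have "\<bar>ln q * Im s * Im w\<bar> \<le> \<bar>ln q\<bar> * \<bar>Im s\<bar>"
      using w(2) by (simp add: abs_mult mult_left_le)
    then show ?thesis by linarith
  qed
  moreover have "ln q * (of_nat n * (Re z + Re w) + Re s * Re w - Im s * Im w)
      = of_nat n * (ln q * Re z / 2) - ln q * Re s * Re z / 2
        + ln q * ((Re s + of_nat n) * (Re w + Re z / 2)) - ln q * Im s * Im w"
    by (simp add: field_simps)
  ultimately have "ln q * (of_nat n * (Re z + Re w) + Re s * Re w - Im s * Im w)
      \<le> of_nat n * (ln q * Re z / 2) + (- ln q * Re s * Re z / 2 + \<bar>ln q\<bar> * \<bar>Im s\<bar>)"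
    by linarith
  then have "exp (ln q * (of_nat n * (Re z + Re w) + Re s * Re w - Im s * Im w))
      \<le> r ^ n * exp (- ln q * Re s * Re z / 2 + \<bar>ln q\<bar> * \<bar>Im s\<bar>)"
    unfolding r_def exp_of_nat_mult[symmetric] exp_add[symmetric] by simp
  then show ?thesis
    unfolding norm_summand_term by (simp add: mult_left_mono mult_ac)
qed

lemma norm_primitive_term_le:
  assumes "0 \<le> t"
  shows "norm (primitive_term n (of_real t)) \<le>
    norm A / (Re s * \<bar>ln q\<bar>) * (norm (poch_coeff n) * r ^ n) * exp (Re s * ln q * t)"
proof -
  have "of_nat n * ln q \<le> 0" using ln_q_neg by (simp add: mult_nonneg_nonpos)
  then have "of_nat n * ln q * (Re z / 2 + t) \<le> 0"
    by (rule mult_nonpos_nonneg) (use Re_z_pos assms in auto)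
  then have "ln q * (of_nat n * (Re z + t) + Re s * t) \<le> of_nat n * (ln q * Re z / 2) + Re s * ln q * t"
    by (simp add: algebra_simps)
  then have "exp (ln q * (of_nat n * (Re z + t) + Re s * t)) \<le> r ^ n * exp (Re s * ln q * t)"
    unfolding r_def exp_of_nat_mult[symmetric] exp_add[symmetric] by simp
  then have "norm (summand_term n (of_real t)) \<le> norm A * (norm (poch_coeff n) * r ^ n) * exp (Re s * ln q * t)"
    unfolding norm_summand_term by (simp add: mult_left_mono mult_ac)
  moreover have "Re s * \<bar>ln q\<bar> \<le> norm ((s + of_nat n) * L)"
    using Re_s_le_norm by (simp add: L_def norm_mult mult_right_mono)
  moreover have "0 < Re s * \<bar>ln q\<bar>" using Re_s_pos ln_q_neg by (simp add: mult_pos_neg)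
  ultimately have "norm (summand_term n (of_real t)) / norm ((s + of_nat n) * L)
      \<le> norm A * (norm (poch_coeff n) * r ^ n) * exp (Re s * ln q * t) / (Re s * \<bar>ln q\<bar>)"
    using r_bounds by (intro frac_le) auto
  then show ?thesis by (simp add: primitive_term_def norm_divide)
qed

lemma summable_poch_coeff: "summable (\<lambda>n. norm (poch_coeff n) * r ^ n)"
  unfolding poch_coeff_def using r_bounds by (rule summable_norm_pochhammer_power)

lemma summable_primitive_term: "0 \<le> t \<Longrightarrow> summable (\<lambda>n. primitive_term n (of_real t))"
  by (rule summable_comparison_test'[OF summable_mult2[OF summable_mult[OF summable_poch_coeff]]])
    (rule norm_primitive_term_le)

lemma has_field_derivative_primitive_term: "(primitive_term n has_field_derivative summand_term n w) (at w)"
proof -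
  have "(primitive_term n has_field_derivative
      A * poch_coeff n * Q ^ n * (exp ((s + of_nat n) * w * L) * ((s + of_nat n) * L)) / ((s + of_nat n) * L)) (at w)"
    unfolding primitive_term_def[abs_def] summand_term_def by (auto intro!: derivative_eq_intros)
  then show ?thesis using s_plus_nonzero L_nonzero by (simp add: summand_term_def mult.assoc)
qed

lemma has_field_derivative_primitive:
  assumes "w \<in> strip"
  shows "(primitive has_field_derivative summand w) (at w)"
proof -
  have "uniform_limit strip (\<lambda>n w. \<Sum>i<n. summand_term i w) (\<lambda>w. \<Sum>i. summand_term i w) sequentially"
    by (rule Weierstrass_m_test[OF norm_summand_term_le summable_mult[OF summable_poch_coeff]])
  then have "uniformly_convergent_on strip (\<lambda>n w. \<Sum>i<n. summand_term i w)"
    unfolding uniformly_convergent_on_def by blast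
  moreover have "0 \<in> strip" using of_real_in_strip[of 0] by simp
  ultimately have "((\<lambda>w. \<Sum>n. primitive_term n w) has_field_derivative (\<Sum>n. summand_term n w)) (at w)"
    using summable_primitive_term[of 0] assms convex_strip open_strip
    by (intro has_field_derivative_series'(2)[of strip _ _ 0])
      (auto intro: has_field_derivative_at_within has_field_derivative_primitive_term simp: interior_open)
  moreover have "(\<Sum>n. summand_term n w) = summand w"
    using summand_term_sums assms strip_subset_halfplane by (auto simp: sums_iff)
  ultimately show ?thesis by (simp add: primitive_def[abs_def])
qed

lemma primitive_exp_bound: "\<exists>K. \<forall>t\<ge>0. norm (primitive (of_real t)) \<le> K * exp (Re s * ln q * t)"
proof (intro exI allI impI)
  fix t :: real assume "0 \<le> t"
  define c where "c n = norm A / (Re s * \<bar>ln q\<bar>) * (norm (poch_coeff n) * r ^ n)" for n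
  have c: "summable c" unfolding c_def by (intro summable_mult summable_poch_coeff)
  have "norm (primitive (of_real t)) \<le> (\<Sum>n. c n * exp (Re s * ln q * t))"
    unfolding primitive_def c_def using \<open>0 \<le> t\<close>
    by (intro norm_suminf_le norm_primitive_term_le summable_mult2 c[unfolded c_def])
  also have "\<dots> = suminf c * exp (Re s * ln q * t)"
    by (rule suminf_mult2[symmetric, OF c])
  finally show "norm (primitive (of_real t)) \<le> suminf c * exp (Re s * ln q * t)" .
qed

lemma A_nonzero: "A \<noteq> 0"
  using q_less_1 by (simp add: A_def powr_def)

lemma primitive_0: "primitive 0 = A / (s * L) * hyp2F1 s s (s + 1) Q"
proof -
  have "pochhammer s n * pochhammer s n / (pochhammer (s + 1) n * of_nat (fact n)) * Q ^ n
      = (s * L / A) * primitive_term n 0" for n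
  proof -
    have rec: "pochhammer s n * (s + of_nat n) = s * pochhammer (s + 1) n"
      using pochhammer_Suc[of s n] pochhammer_rec[of s n] by simp
    have "pochhammer (s + 1) n \<noteq> 0"
    proof
      assume "pochhammer (s + 1) n = 0"
      then obtain k where "s + 1 = - of_nat k" by (auto simp: pochhammer_eq_0_iff)
      then have "Re (s + 1) = - of_nat k" by simp
      with Re_s_pos show False by simp
    qed
    then have "pochhammer s n / pochhammer (s + 1) n = s / (s + of_nat n)"
      using rec s_plus_nonzero by (simp add: field_simps)
    then have "pochhammer s n * pochhammer s n / (pochhammer (s + 1) n * of_nat (fact n))
        = s / (s + of_nat n) * poch_coeff n"
      unfolding poch_coeff_def by (metis of_nat_fact times_divide_times_eq)
    then show ?thesis
      using A_nonzero L_nonzero by (simp add: primitive_term_def summand_term_def)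
  qed
  then have "hyp2F1 s s (s + 1) Q = (\<Sum>n. (s * L / A) * primitive_term n 0)"
    unfolding hyp2F1_def by simp
  also have "\<dots> = (s * L / A) * primitive 0"
  proof -
    have "(\<lambda>n. primitive_term n 0) sums primitive 0"
      using summable_primitive_term[of 0] by (simp add: primitive_def summable_sums)
    then have "(\<lambda>n. (s * L / A) * primitive_term n 0) sums ((s * L / A) * primitive 0)"
      by (rule sums_mult)
    then show ?thesis by (rule sums_unique[symmetric])
  qed
  finally show ?thesis
    using s_nonzero L_nonzero A_nonzero by simp
qed

definition "rho = exp (Re z * ln q)"

lemma rho_bounds: "0 < rho" "rho < 1"
  unfolding rho_def using Re_z_pos ln_q_neg by (auto simp: mult_pos_neg)

lemma norm_X_of_real_le: "0 \<le> t \<Longrightarrow> norm (X (of_real t)) \<le> rho"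
  unfolding norm_X rho_def using ln_q_neg by (simp add: mult_nonneg_nonpos algebra_simps)

lemma norm_one_minus_X_ge: "0 \<le> t \<Longrightarrow> 1 - rho \<le> norm (1 - X (of_real t))"
  using norm_X_of_real_le[of t] norm_triangle_ineq2[of 1 "X (of_real t)"] by simp

lemma summand_exp_bound: "\<exists>K. \<forall>t\<ge>0. norm (summand (of_real t)) \<le> K * exp (Re s * ln q * t)"
proof (intro exI allI impI)
  fix t :: real assume t: "0 \<le> t"
  define c where "c = ((1 - q) / (1 - rho)) powr Re s * exp (\<bar>Im s\<bar> * pi)"
  have "norm (complex_of_real (1 - q) / (1 - X (of_real t))) = (1 - q) / norm (1 - X (of_real t))"
    unfolding norm_divide norm_of_real using q_less_1 by simp
  also have "\<dots> \<le> (1 - q) / (1 - rho)"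
    using q_less_1 rho_bounds norm_one_minus_X_ge[OF t] by (intro divide_left_mono mult_pos_pos) auto
  finally have "norm (complex_of_real (1 - q) / (1 - X (of_real t))) powr Re s \<le> ((1 - q) / (1 - rho)) powr Re s"
    using Re_s_pos by (intro powr_mono2) auto
  then have "norm ((complex_of_real (1 - q) / (1 - X (of_real t))) powr s) \<le> c"
    unfolding c_def by (rule order.trans[OF norm_powr_le mult_right_mono]) auto
  then have "norm (summand (of_real t)) \<le> c * exp (Re s * (t + 1) * ln q)"
    by (simp add: summand_def norm_mult L_def mult_right_mono)
  then show "norm (summand (of_real t)) \<le> c * exp (Re s * ln q) * exp (Re s * ln q * t)"
    by (simp add: algebra_simps flip: exp_add)
qed

lemma summand_deriv_exp_bound:
  "\<exists>K. \<forall>t\<ge>0. norm (summand_deriv j (of_real t)) \<le> K * exp (Re s * ln q * t)"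
proof -
  obtain K where K: "\<And>t. 0 \<le> t \<Longrightarrow> norm (summand (of_real t)) \<le> K * exp (Re s * ln q * t)"
    using summand_exp_bound by blast
  have "compact (poly (Ppoly j s) ` cball 0 1)"
    by (intro compact_continuous_image continuous_intros) auto
  then obtain M where M: "\<And>x. x \<in> cball 0 1 \<Longrightarrow> norm (poly (Ppoly j s) x) \<le> M"
    unfolding bounded_iff by (meson compact_imp_bounded bounded_iff image_eqI)
  have "norm (summand_deriv j (of_real t)) \<le>
      (norm s * K * (\<bar>ln q\<bar> / (1 - rho)) ^ j * M) * exp (Re s * ln q * t)" if t: "0 \<le> t" for t
  proof -
    have X: "X (of_real t) \<in> cball 0 1" using norm_X_of_real_le[OF t] rho_bounds by simp
    have "norm (Y (of_real t)) \<le> \<bar>ln q\<bar> / (1 - rho)"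
      unfolding Y_def norm_divide L_def norm_of_real using rho_bounds norm_one_minus_X_ge[OF t]
      by (intro divide_left_mono mult_pos_pos) (auto simp: norm_minus_commute)
    then have "norm (summand_deriv j (of_real t)) \<le>
        norm s * (K * exp (Re s * ln q * t)) * (\<bar>ln q\<bar> / (1 - rho)) ^ j * M"
      unfolding summand_deriv_def norm_mult norm_power
      using K[OF t] M[OF X] order_trans[OF norm_ge_zero K[OF t]] rho_bounds
      by (intro mult_mono power_mono) auto
    then show ?thesis by (simp add: mult_ac)
  qed
  then show ?thesis by blast
qed

lemma euler_maclaurin_summand:
  "2 \<le> p \<Longrightarrow> euler_maclaurin p (\<lambda>t. primitive (of_real t)) (\<lambda>j t. summand_deriv j (of_real t))"
  by unfold_locales
    (auto intro!: has_vector_derivative_real_field has_field_derivative_primitive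
      has_field_derivative_summand_deriv of_real_in_strip of_real_in_halfplane)

lemma X_eq_powr: "X w = of_real q powr (w + z)"
  by (simp add: X_def L_def powr_of_real_pos[OF q_pos])

lemma summand_eq_powr:
  "summand w = ((1 - of_real q) / (1 - of_real q powr (w + z))) powr s * of_real q powr (s * (w + 1))"
  by (simp add: summand_def X_eq_powr L_def powr_of_real_pos[OF q_pos])

lemma summand_of_nat: "summand (of_nat k) = of_real q powr (s * of_nat (k + 1)) / qnum q (of_nat k + z) powr s"
proof -
  define u where "u = qnum q (of_nat k + z)"
  have "u = (1 - X (of_nat k)) / of_real (1 - q)"
    by (simp add: u_def qnum_def X_eq_powr)
  moreover have "0 < Re (1 - X (of_nat k))"
    using Re_one_minus_X_pos of_real_in_halfplane[of "real k"] by simp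
  ultimately have "0 < Re u" and "of_real (1 - q) / (1 - X (of_nat k)) = inverse u"
    using q_less_1 by (simp_all add: Re_divide_of_real)
  then have "(of_real (1 - q) / (1 - X (of_nat k))) powr s = inverse (u powr s)"
    by (simp add: inverse_powr_complex powr_minus)
  then show ?thesis
    by (simp add: summand_def u_def L_def powr_of_real_pos[OF q_pos] divide_inverse algebra_simps)
qed

lemma qzeta_eq_suminf: "qzeta s z q = (\<Sum>k. summand (of_real (real k)))"
  by (simp add: qzeta_def summand_of_nat)

lemma A_eq: "A = of_real (q - q^2) powr s"
proof -
  have "of_real (q - q^2) powr s = of_real q powr s * of_real (1 - q) powr s"
    using q_pos by (simp add: power2_eq_square algebra_simps flip: powr_times_real_left)
  then show ?thesis by (simp add: A_def L_def powr_of_real_pos[OF q_pos])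
qed

lemma summand_0: "summand 0 = (of_real (q - q^2) / (1 - of_real q powr z)) powr s"
proof -
  have eq: "of_real (q - q^2) / (1 - of_real q powr z) = of_real q * (of_real (1 - q) / (1 - X 0))"
    by (simp add: X_eq_powr power2_eq_square algebra_simps)
  have "(of_real q * (of_real (1 - q) / (1 - X 0))) powr s
      = of_real q powr s * (of_real (1 - q) / (1 - X 0)) powr s"
    by (rule powr_times_real_left) (use q_pos in auto)
  then show ?thesis unfolding eq by (simp add: summand_def L_def powr_of_real_pos[OF q_pos] mult_ac)
qed

context
  fixes m :: nat
  assumes m_pos: "1 \<le> m"
begin

interpretation em: euler_maclaurin "2 * m" "\<lambda>t. primitive (of_real t)" "\<lambda>j t. summand_deriv j (of_real t)"
  using m_pos by (intro euler_maclaurin_summand) simp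

lemma correction_0:
  "em.correction 0 = s * summand 0 * (\<Sum>k=1..m. of_real (bernnum (2*k) / fact (2*k))
      * Y 0 ^ (2*k - 1) * poly (Ppoly (2*k - 1) s) (X 0))"
proof -
  have "em.correction 0 =
      (\<Sum>k=1..m. (-1)^(2*k-1) * of_real (bernnum (2*k) / fact (2*k)) * summand_deriv (2*k-1) 0)"
    unfolding em.correction_def by (subst sum_even_part) (simp_all add: bernnum_odd)
  also have "\<dots> = (\<Sum>k=1..m. s * summand 0 * (of_real (bernnum (2*k) / fact (2*k))
      * Y 0 ^ (2*k - 1) * poly (Ppoly (2*k - 1) s) (X 0)))"
  proof (intro sum.cong refl)
    fix k assume "k \<in> {1..m}"
    then have "(-1::complex) ^ (2*k - 1) = -1" by (simp add: odd_pos)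
    then show "(-1)^(2*k-1) * of_real (bernnum (2*k) / fact (2*k)) * summand_deriv (2*k-1) 0 =
        s * summand 0 * (of_real (bernnum (2*k) / fact (2*k)) * Y 0 ^ (2*k - 1) * poly (Ppoly (2*k - 1) s) (X 0))"
      by (simp add: summand_deriv_def mult_ac)
  qed
  finally show ?thesis by (simp add: sum_distrib_left)
qed

lemma integral_remainder_eq_Rrem: "integral {0..} em.remainder = Rrem m s z q"
proof -
  have "em.remainder = (\<lambda>t. s * (
      of_real (pbernpoly (2*m) t / fact (2*m))
      * (of_real (ln q) / (of_real q powr (of_real t + z) - 1)) ^ (2*m)
      * ((1 - of_real q) / (1 - of_real q powr (of_real t + z))) powr s
      * of_real q powr (s * (of_real t + 1))
      * poly (Ppoly (2*m) s) (of_real q powr (of_real t + z))))"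
    by (rule ext, unfold em.remainder_def)
      (simp add: summand_deriv_def Y_def summand_eq_powr X_eq_powr L_def mult_ac)
  then show ?thesis by (simp add: Rrem_def)
qed

lemma qzeta_euler_maclaurin:
  "qzeta s z q = - primitive 0 + summand 0 / 2
    + s * summand 0 * (\<Sum>k=1..m. of_real (bernnum (2*k) / fact (2*k))
        * Y 0 ^ (2*k - 1) * poly (Ppoly (2*k - 1) s) (X 0))
    - Rrem m s z q"
proof -
  have decay: "Re s * ln q < 0" using Re_s_pos ln_q_neg by (simp add: mult_pos_neg)
  have tendsto_zero: "(\<lambda>N. f (of_real (real N))) \<longlonglongrightarrow> 0"
    if "\<exists>K. \<forall>t\<ge>0. norm (f (of_real t)) \<le> K * exp (Re s * ln q * t)" for f :: "complex \<Rightarrow> complex"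
    using that tendsto_zero_exp_bound[OF decay, of "\<lambda>t. f (of_real t)"] by blast
  obtain C where "\<forall>t\<ge>0. norm (em.remainder t) \<le> C * exp (Re s * ln q * t)"
    using summand_deriv_exp_bound em.remainder_exp_bound by meson
  moreover have "em.remainder integrable_on {0..real N}" for N
    using em.has_integral_remainder by blast
  ultimately have "(\<lambda>N. integral {0..real N} em.remainder) \<longlonglongrightarrow> integral {0..} em.remainder"
    using improper_integral_exp_bound(2)[OF decay] by blast
  then have "(\<lambda>k. summand_deriv 0 (of_real (real k))) sums (- primitive (of_real 0)
      + summand_deriv 0 (of_real 0) / 2 + em.correction 0 - (-1)^(2*m) * integral {0..} em.remainder)"
    by (intro em.euler_maclaurin_sums tendsto_zero primitive_exp_bound summand_deriv_exp_bound)
  then show ?thesis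
    using correction_0 integral_remainder_eq_Rrem by (simp add: qzeta_eq_suminf sums_iff)
qed

end

end

theorem proposition2:
  fixes q :: real and z s :: complex and m :: nat
  assumes "0 < q" "q < 1" "0 < Re z" "1 \<le> m" "0 < Re s"
  shows "qzeta s z q =
      - (of_real (q - q^2) powr s / (s * of_real (ln q))) * hyp2F1 s s (s + 1) (of_real q powr z)
      + 1/2 * ((of_real (q - q^2)) / (1 - of_real q powr z)) powr s
      + s * ((of_real (q - q^2)) / (1 - of_real q powr z)) powr s
          * (\<Sum>k=1..m. of_real (bernnum (2*k) / fact (2*k))
               * (of_real (ln q) / (of_real q powr z - 1)) ^ (2*k - 1)
               * poly (Ppoly (2*k - 1) s) (of_real q powr z))
      - Rrem m s z q"
proof -
  interpret qzeta_setting q z s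
    using assms by unfold_locales
  have "primitive 0 = of_real (q - q^2) powr s / (s * of_real (ln q)) * hyp2F1 s s (s + 1) (of_real q powr z)"
    by (simp add: primitive_0 A_eq Q_def L_def powr_of_real_pos[OF assms(1)])
  moreover have "Y 0 = of_real (ln q) / (of_real q powr z - 1)" "X 0 = of_real q powr z"
    by (simp_all add: Y_def L_def X_eq_powr)
  ultimately show ?thesis
    using qzeta_euler_maclaurin[OF assms(4)] by (simp add: summand_0)
qed

end
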